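(* Let $(x^*,y^* )$ be an optimal solution of the LP relaxation of an FTFP instance $\mathcal I$ which is complete (i.e. $x^*_{ij}\in\{0,y^*_i\}$ for all $i,j$) and satisfies $\sum_{i\in F}x^*_{ij}=r_j$ for all $j\in C$. Fix $\bar r$ with $1\le \bar r\le \min_{j\in C} r_j$. Define for all $i\in F$, $j\in C$: $$\hat y_i=\max\{\lfloor y^*_i-\bar r\rfloor,0\},\quad \hat x_{ij}=\max\{\lfloor x^*_{ij}-\bar r\rfloor,0\},\quad \dot y_i=y^*_i-\hat y_i,\quad \dot x_{ij}=x^*_{ij}-\hat x_{ij}.$$ Let $\hat{\mathcal I}$ (resp. $\dot{\mathcal I}$) be the FTFP instance with the same facilities, clients, opening costs and connection costs as $\mathcal I$, but with requirements $\hat r_j=\sum_{i\in F}\hat x_{ij}$ (resp. $\dot r_j=\sum_{i\in F}\dot x_{ij}$). Then: (i) $(\hat x,\hat y)$ is a feasible integral solution of $\hat{\mathcal I}$; (ii) $(\dot x,\dot y)$ is a feasible fractional solution of the LP relaxation of $\dot{\mathcal I}$; (iii) $(\hat x,\hat y)$ and $(\dot x,\dot y)$ are optimal solutions of the LP relaxations of $\hat{\mathcal I}$ and $\dot{\mathcal I}$, respectively; (iv) for every $j\in C$, $\bar r\le \dot r_j\le (\bar r+1)\,|F|$.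
   Context: Metric Fault-Tolerant Facility Placement (FTFP): a finite set $F$ of facilities with opening costs $f_i\ge 0$, a finite set $C$ of clients with requirements $r_j$, and metric connection costs $c_{ij}$; each facility may be opened any number of times (cost $f_i$ per copy) and each client $j$ must be connected to $r_j$ open copies. Its LP relaxation is: minimize $\sum_{i,j}c_{ij}x_{ij}+\sum_i f_iy_i$ subject to $\sum_{i\in F}x_{ij}\ge r_j$ for all $j$, $y_i-x_{ij}\ge 0$ for all $i,j$, $x,y\ge 0$. A feasible integral solution is a feasible LP solution with integer entries. *)

theory Defs
  imports Complex_Main
begin

text \<open>An FTFP instance: finite facility set F, finite client set C, opening costs fc,
  connection costs cc, requirements r (real-valued here; for genuine instances they
  are nonnegative integers).\<close>

definition ftfp_metric :: "'f set \<Rightarrow> 'c set \<Rightarrow> ('f \<Rightarrow> 'c \<Rightarrow> real) \<Rightarrow> bool" where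
  "ftfp_metric F C cc \<longleftrightarrow>
     (\<forall>i\<in>F. \<forall>j\<in>C. cc i j \<ge> 0) \<and>
     (\<forall>i\<in>F. \<forall>i'\<in>F. \<forall>j\<in>C. \<forall>j'\<in>C. cc i j \<le> cc i j' + cc i' j' + cc i' j)"

definition ftfp_lp_feasible ::
  "'f set \<Rightarrow> 'c set \<Rightarrow> ('c \<Rightarrow> real) \<Rightarrow> ('f \<Rightarrow> 'c \<Rightarrow> real) \<Rightarrow> ('f \<Rightarrow> real) \<Rightarrow> bool" where
  "ftfp_lp_feasible F C r x y \<longleftrightarrow>
     (\<forall>j\<in>C. (\<Sum>i\<in>F. x i j) \<ge> r j) \<and>
     (\<forall>i\<in>F. \<forall>j\<in>C. y i - x i j \<ge> 0) \<and>
     (\<forall>i\<in>F. \<forall>j\<in>C. x i j \<ge> 0) \<and> (\<forall>i\<in>F. y i \<ge> 0)"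

definition ftfp_cost ::
  "'f set \<Rightarrow> 'c set \<Rightarrow> ('f \<Rightarrow> real) \<Rightarrow> ('f \<Rightarrow> 'c \<Rightarrow> real) \<Rightarrow> ('f \<Rightarrow> 'c \<Rightarrow> real) \<Rightarrow> ('f \<Rightarrow> real) \<Rightarrow> real" where
  "ftfp_cost F C fc cc x y = (\<Sum>i\<in>F. \<Sum>j\<in>C. cc i j * x i j) + (\<Sum>i\<in>F. fc i * y i)"

definition ftfp_lp_optimal ::
  "'f set \<Rightarrow> 'c set \<Rightarrow> ('f \<Rightarrow> real) \<Rightarrow> ('f \<Rightarrow> 'c \<Rightarrow> real) \<Rightarrow> ('c \<Rightarrow> real)
     \<Rightarrow> ('f \<Rightarrow> 'c \<Rightarrow> real) \<Rightarrow> ('f \<Rightarrow> real) \<Rightarrow> bool" where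
  "ftfp_lp_optimal F C fc cc r x y \<longleftrightarrow>
     ftfp_lp_feasible F C r x y \<and>
     (\<forall>x' y'. ftfp_lp_feasible F C r x' y' \<longrightarrow> ftfp_cost F C fc cc x y \<le> ftfp_cost F C fc cc x' y')"

definition ftfp_integral :: "'f set \<Rightarrow> 'c set \<Rightarrow> ('f \<Rightarrow> 'c \<Rightarrow> real) \<Rightarrow> ('f \<Rightarrow> real) \<Rightarrow> bool" where
  "ftfp_integral F C x y \<longleftrightarrow> (\<forall>i\<in>F. \<forall>j\<in>C. x i j \<in> \<int>) \<and> (\<forall>i\<in>F. y i \<in> \<int>)"

definition ftfp_complete :: "'f set \<Rightarrow> 'c set \<Rightarrow> ('f \<Rightarrow> 'c \<Rightarrow> real) \<Rightarrow> ('f \<Rightarrow> real) \<Rightarrow> bool" where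
  "ftfp_complete F C x y \<longleftrightarrow> (\<forall>i\<in>F. \<forall>j\<in>C. x i j = 0 \<or> x i j = y i)"

end

theory Submission
  imports Defs
begin

text \<open>Split every value t of the optimal solution into its integral excess
  max(floor(t - rbar), 0) over rbar and the residue.  The excess part keeps y_i >= x_ij
  because truncation is monotone; the residue part keeps it because completeness gives
  x_ij in {0, y_i}.  The two parts add up to the optimal solution and their requirements
  add up to r, so each part is optimal: a cheaper solution for one part plus the other part
  would beat the optimum.  A residue is at most rbar + 1, and at least rbar when t >= rbar;
  if no x_ij reaches rbar, nothing is truncated and the residual requirement is r_j >= rbar.\<close>

definition floor_excess :: "real \<Rightarrow> real \<Rightarrow> real" where
  "floor_excess b t = max (real_of_int \<lfloor>t - b\<rfloor>) 0"

lemma floor_excess_nonneg: "0 \<le> floor_excess b t"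
  unfolding floor_excess_def by simp

lemma floor_excess_Ints: "floor_excess b t \<in> \<int>"
  unfolding floor_excess_def by (simp add: max_def)

lemma floor_excess_mono:
  assumes "s \<le> t" shows "floor_excess b s \<le> floor_excess b t"
proof -
  from assms have "\<lfloor>s - b\<rfloor> \<le> \<lfloor>t - b\<rfloor>" by (intro floor_mono) simp
  then show ?thesis unfolding floor_excess_def by linarith
qed

lemma floor_excess_eq_0: "t < b + 1 \<Longrightarrow> floor_excess b t = 0"
  unfolding floor_excess_def by (simp add: floor_less_iff)

lemma floor_excess_le: "0 \<le> b \<Longrightarrow> 0 \<le> t \<Longrightarrow> floor_excess b t \<le> t"
  unfolding floor_excess_def by linarith

lemma floor_residue_le: "t - floor_excess b t \<le> b + 1"
  unfolding floor_excess_def by linarith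

lemma floor_residue_ge: "b \<le> t \<Longrightarrow> b \<le> t - floor_excess b t"
  unfolding floor_excess_def by linarith

lemma sum_floor_residue_le:
  "(\<Sum>i\<in>F. x i - floor_excess b (x i)) \<le> (b + 1) * real (card F)"
  using sum_bounded_above[of F "\<lambda>i. x i - floor_excess b (x i)" "b + 1"]
  by (simp add: floor_residue_le mult.commute)

lemma sum_floor_residue_ge:
  assumes "finite F" "0 \<le> b" "\<forall>i\<in>F. 0 \<le> x i" "b \<le> (\<Sum>i\<in>F. x i)"
  shows "b \<le> (\<Sum>i\<in>F. x i - floor_excess b (x i))"
proof (cases "\<exists>i\<in>F. b \<le> x i")
  case True
  then obtain k where k: "k \<in> F" "b \<le> x k" by blast
  have "b \<le> x k - floor_excess b (x k)" using k(2) by (rule floor_residue_ge)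
  also have "\<dots> \<le> (\<Sum>i\<in>F. x i - floor_excess b (x i))"
    using assms k(1) by (intro member_le_sum) (auto simp: floor_excess_le)
  finally show ?thesis .
next
  case False
  then have "(\<Sum>i\<in>F. x i - floor_excess b (x i)) = (\<Sum>i\<in>F. x i)"
    by (intro sum.cong) (auto simp: floor_excess_eq_0)
  then show ?thesis using assms(4) by simp
qed

lemma ftfp_cost_add:
  "ftfp_cost F C fc cc (\<lambda>i j. xa i j + xb i j) (\<lambda>i. ya i + yb i)
     = ftfp_cost F C fc cc xa ya + ftfp_cost F C fc cc xb yb"
  unfolding ftfp_cost_def by (simp add: distrib_left sum.distrib)

lemma ftfp_lp_feasible_add:
  assumes "ftfp_lp_feasible F C ra xa ya" "ftfp_lp_feasible F C rb xb yb"
    and "\<forall>j\<in>C. r j \<le> ra j + rb j"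
  shows "ftfp_lp_feasible F C r (\<lambda>i j. xa i j + xb i j) (\<lambda>i. ya i + yb i)"
  using assms unfolding ftfp_lp_feasible_def
  by (force simp: sum.distrib intro: add_mono order_trans)

lemma ftfp_lp_optimal_summand:
  assumes opt: "ftfp_lp_optimal F C fc cc r (\<lambda>i j. xa i j + xb i j) (\<lambda>i. ya i + yb i)"
    and req: "\<forall>j\<in>C. r j \<le> ra j + rb j"
    and feas_a: "ftfp_lp_feasible F C ra xa ya" and feas_b: "ftfp_lp_feasible F C rb xb yb"
  shows "ftfp_lp_optimal F C fc cc ra xa ya"
  unfolding ftfp_lp_optimal_def
proof (intro conjI allI impI feas_a)
  fix x y assume "ftfp_lp_feasible F C ra x y"
  then have "ftfp_lp_feasible F C r (\<lambda>i j. x i j + xb i j) (\<lambda>i. y i + yb i)"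
    using feas_b req by (rule ftfp_lp_feasible_add)
  then have "ftfp_cost F C fc cc (\<lambda>i j. xa i j + xb i j) (\<lambda>i. ya i + yb i)
      \<le> ftfp_cost F C fc cc (\<lambda>i j. x i j + xb i j) (\<lambda>i. y i + yb i)"
    using opt unfolding ftfp_lp_optimal_def by blast
  then show "ftfp_cost F C fc cc xa ya \<le> ftfp_cost F C fc cc x y"
    by (simp add: ftfp_cost_add)
qed

lemma ftfp_lp_feasible_floor_excess:
  assumes "ftfp_lp_feasible F C r x y" "0 \<le> b"
  shows "ftfp_lp_feasible F C (\<lambda>j. \<Sum>i\<in>F. floor_excess b (x i j))
           (\<lambda>i j. floor_excess b (x i j)) (\<lambda>i. floor_excess b (y i))"
  using assms unfolding ftfp_lp_feasible_def
  by (auto simp: floor_excess_nonneg intro: floor_excess_mono)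

lemma ftfp_integral_floor_excess:
  "ftfp_integral F C (\<lambda>i j. floor_excess b (x i j)) (\<lambda>i. floor_excess b (y i))"
  unfolding ftfp_integral_def by (simp add: floor_excess_Ints)

lemma ftfp_lp_feasible_floor_residue:
  assumes feas: "ftfp_lp_feasible F C r x y" and complete: "ftfp_complete F C x y"
    and "0 \<le> b"
  shows "ftfp_lp_feasible F C (\<lambda>j. \<Sum>i\<in>F. x i j - floor_excess b (x i j))
           (\<lambda>i j. x i j - floor_excess b (x i j)) (\<lambda>i. y i - floor_excess b (y i))"
proof -
  have "x i j - floor_excess b (x i j) \<le> y i - floor_excess b (y i)"
    if "i \<in> F" "j \<in> C" for i j
  proof (cases "x i j = 0")
    case True
    then show ?thesis using feas that \<open>0 \<le> b\<close>
      by (simp add: floor_excess_eq_0 floor_excess_le ftfp_lp_feasible_def)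
  next
    case False
    then have "x i j = y i" using complete that by (auto simp: ftfp_complete_def)
    then show ?thesis by simp
  qed
  then show ?thesis
    using assms unfolding ftfp_lp_feasible_def by (auto simp: floor_excess_le)
qed

theorem lemma6:
  fixes F :: "'f set" and C :: "'c set"
    and fc :: "'f \<Rightarrow> real" and cc :: "'f \<Rightarrow> 'c \<Rightarrow> real" and r :: "'c \<Rightarrow> nat"
    and xs :: "'f \<Rightarrow> 'c \<Rightarrow> real" and ys :: "'f \<Rightarrow> real" and rbar :: real
    and xh xd :: "'f \<Rightarrow> 'c \<Rightarrow> real" and yh yd :: "'f \<Rightarrow> real" and rh rd :: "'c \<Rightarrow> real"
  assumes finF: "finite F" and finC: "finite C"
    and fc_nonneg: "\<forall>i\<in>F. fc i \<ge> 0"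
    and metric: "ftfp_metric F C cc"
    and opt: "ftfp_lp_optimal F C fc cc (\<lambda>j. real (r j)) xs ys"
    and complete: "ftfp_complete F C xs ys"
    and tight: "\<forall>j\<in>C. (\<Sum>i\<in>F. xs i j) = real (r j)"
    and rbar_ge: "1 \<le> rbar" and rbar_le: "\<forall>j\<in>C. rbar \<le> real (r j)"
    and yh_def: "\<forall>i. yh i = max (real_of_int \<lfloor>ys i - rbar\<rfloor>) 0"
    and xh_def: "\<forall>i j. xh i j = max (real_of_int \<lfloor>xs i j - rbar\<rfloor>) 0"
    and yd_def: "\<forall>i. yd i = ys i - yh i"
    and xd_def: "\<forall>i j. xd i j = xs i j - xh i j"
    and rh_def: "\<forall>j. rh j = (\<Sum>i\<in>F. xh i j)"
    and rd_def: "\<forall>j. rd j = (\<Sum>i\<in>F. xd i j)"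
  shows "(ftfp_lp_feasible F C rh xh yh \<and> ftfp_integral F C xh yh)
       \<and> ftfp_lp_feasible F C rd xd yd
       \<and> ftfp_lp_optimal F C fc cc rh xh yh \<and> ftfp_lp_optimal F C fc cc rd xd yd
       \<and> (\<forall>j\<in>C. rbar \<le> rd j \<and> rd j \<le> (rbar + 1) * real (card F))"
proof -
  have hat: "xh = (\<lambda>i j. floor_excess rbar (xs i j))" "yh = (\<lambda>i. floor_excess rbar (ys i))"
    "rh = (\<lambda>j. \<Sum>i\<in>F. floor_excess rbar (xs i j))"
    using xh_def yh_def rh_def by (auto simp: floor_excess_def)
  have dot: "xd = (\<lambda>i j. xs i j - floor_excess rbar (xs i j))"
    "yd = (\<lambda>i. ys i - floor_excess rbar (ys i))"
    "rd = (\<lambda>j. \<Sum>i\<in>F. xs i j - floor_excess rbar (xs i j))"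
    using xd_def yd_def rd_def hat by auto
  have feas: "ftfp_lp_feasible F C (\<lambda>j. real (r j)) xs ys"
    using opt by (simp add: ftfp_lp_optimal_def)
  have feas_hat: "ftfp_lp_feasible F C rh xh yh"
    unfolding hat using feas rbar_ge by (intro ftfp_lp_feasible_floor_excess) auto
  have feas_dot: "ftfp_lp_feasible F C rd xd yd"
    unfolding dot using feas complete rbar_ge by (intro ftfp_lp_feasible_floor_residue) auto
  have req: "\<forall>j\<in>C. real (r j) \<le> rh j + rd j" "\<forall>j\<in>C. real (r j) \<le> rd j + rh j"
    using tight by (auto simp: hat dot sum.distrib[symmetric])
  have "ftfp_lp_optimal F C fc cc rh xh yh" "ftfp_lp_optimal F C fc cc rd xd yd"
    using ftfp_lp_optimal_summand[OF _ req(1) feas_hat feas_dot]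
      ftfp_lp_optimal_summand[OF _ req(2) feas_dot feas_hat] opt
    by (simp_all add: hat dot)
  moreover have "\<forall>j\<in>C. rbar \<le> rd j \<and> rd j \<le> (rbar + 1) * real (card F)"
    using feas finF rbar_ge tight rbar_le
    by (auto simp: dot sum_floor_residue_le ftfp_lp_feasible_def intro!: sum_floor_residue_ge)
  ultimately show ?thesis
    using feas_hat feas_dot ftfp_integral_floor_excess by (simp add: hat)
qed

end
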